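(* Let $\rho_{AB}$ be a two-qubit state and let $\mathcal T$ be its correlation matrix, $\mathcal T_{ij}=\mathrm{Tr}[\rho_{AB}\,\sigma_i\otimes\sigma_j]$, $i,j\in\{1,2,3\}$, with singular values $\tau_1\ge\tau_2\ge\tau_3\ge0$. If $\rho_{AB}$ is non-steerable, then $$R_G(\tau_3^2,\tau_2^2,\tau_1^2)\le\tfrac12 .$$
   Context: $\sigma_1,\sigma_2,\sigma_3$ are the Pauli matrices. $R_G$ is the symmetric elliptic integral (DLMF 19.16.3), which can be written as $R_G(a,b,c)=\frac{1}{4\pi}\int_0^{2\pi}\int_0^{\pi}\sqrt{a\sin^2\theta\cos^2\phi+b\sin^2\theta\sin^2\phi+c\cos^2\theta}\;\sin\theta\,d\theta\,d\phi$. "Non-steerable" is in the standard sense of EPR steering (the state admits a local hidden state model, so one party cannot steer the other). *)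

theory Defs
  imports "HOL-Probability.Probability"
begin

type_synonym cmat2 = "complex ^ 2 ^ 2"
type_synonym cmat4 = "complex ^ (2 \<times> 2) ^ (2 \<times> 2)"

definition psd :: "complex ^ 'n ^ 'n \<Rightarrow> bool" where
  "psd A \<longleftrightarrow> (\<forall>v :: complex ^ 'n.
      Im (\<Sum>i\<in>UNIV. \<Sum>j\<in>UNIV. cnj (v $ i) * A $ i $ j * v $ j) = 0 \<and>
      0 \<le> Re (\<Sum>i\<in>UNIV. \<Sum>j\<in>UNIV. cnj (v $ i) * A $ i $ j * v $ j))"

definition density_matrix :: "complex ^ 'n ^ 'n \<Rightarrow> bool" where
  "density_matrix A \<longleftrightarrow> psd A \<and> trace A = 1"

definition kron :: "cmat2 \<Rightarrow> cmat2 \<Rightarrow> cmat4" where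
  "kron A B = (\<chi> r c. A $ fst r $ fst c * B $ snd r $ snd c)"

definition ptrace_A :: "cmat4 \<Rightarrow> cmat2" where
  "ptrace_A X = (\<chi> k l. \<Sum>i\<in>UNIV. X $ (i, k) $ (i, l))"

definition sigma1 :: cmat2 where
  "sigma1 = (\<chi> i j. if i = j then 0 else 1)"
definition sigma2 :: cmat2 where
  "sigma2 = (\<chi> i j. if i = j then 0 else if i = 0 then - \<i> else \<i>)"
definition sigma3 :: cmat2 where
  "sigma3 = (\<chi> i j. if i \<noteq> j then 0 else if i = 0 then 1 else -1)"

definition pauli :: "3 \<Rightarrow> cmat2" where
  "pauli i = (if i = 0 then sigma1 else if i = 1 then sigma2 else sigma3)"

text \<open>Correlation matrix T_ij = Tr[rho (sigma_i (x) sigma_j)] (real for Hermitian rho).\<close>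
definition corr_matrix :: "cmat4 \<Rightarrow> real ^ 3 ^ 3" where
  "corr_matrix \<rho> = (\<chi> i j. Re (trace (\<rho> ** kron (pauli i) (pauli j))))"

text \<open>t1 >= t2 >= t3 >= 0 are the singular values of T (with multiplicity), i.e. their
  squares are the eigenvalues of T^T T counted via the characteristic polynomial.\<close>
definition singular_values3 :: "real ^ 3 ^ 3 \<Rightarrow> real \<Rightarrow> real \<Rightarrow> real \<Rightarrow> bool" where
  "singular_values3 T t1 t2 t3 \<longleftrightarrow> t1 \<ge> t2 \<and> t2 \<ge> t3 \<and> t3 \<ge> 0 \<and>
     (\<forall>x::real. det (mat x - transpose T ** T) = (x - t1^2) * (x - t2^2) * (x - t3^2))"

text \<open>Symmetric elliptic integral R_G (DLMF 19.16.3), in the integral form given.\<close>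
definition R_G :: "real \<Rightarrow> real \<Rightarrow> real \<Rightarrow> real" where
  "R_G a b c = 1 / (4 * pi) * integral (cbox (0, 0) (2 * pi, pi))
     (\<lambda>(\<phi>, \<theta>). sqrt (a * (sin \<theta>)^2 * (cos \<phi>)^2 + b * (sin \<theta>)^2 * (sin \<phi>)^2
                        + c * (cos \<theta>)^2) * sin \<theta>)"

definition povm :: "nat \<Rightarrow> (nat \<Rightarrow> cmat2) \<Rightarrow> bool" where
  "povm n M \<longleftrightarrow> n \<ge> 1 \<and> (\<forall>a<n. psd (M a)) \<and> (\<Sum>a<n. M a) = mat 1"

definition assemblage :: "cmat4 \<Rightarrow> (nat \<Rightarrow> cmat2) \<Rightarrow> nat \<Rightarrow> cmat2" where
  "assemblage \<rho> M a = ptrace_A (kron (M a) (mat 1) ** \<rho>)"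

text \<open>Local hidden state model for steering from A to B: hidden variable lambda
  distributed by the probability measure mu, hidden states S lambda of Bob, response
  functions p n M a lambda = p(a | M, lambda), for every POVM (n, M) of Alice.\<close>
definition lhs_model :: "'l measure \<Rightarrow> ('l \<Rightarrow> cmat2) \<Rightarrow>
    (nat \<Rightarrow> (nat \<Rightarrow> cmat2) \<Rightarrow> nat \<Rightarrow> 'l \<Rightarrow> real) \<Rightarrow> cmat4 \<Rightarrow> bool" where
  "lhs_model \<mu> S p \<rho> \<longleftrightarrow> prob_space \<mu> \<and> S \<in> borel_measurable \<mu> \<and>
     (\<forall>l\<in>space \<mu>. density_matrix (S l)) \<and>
     (\<forall>n M. povm n M \<longrightarrow>
        (\<forall>l\<in>space \<mu>. (\<forall>a<n. 0 \<le> p n M a l) \<and> (\<Sum>a<n. p n M a l) = 1) \<and>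
        (\<forall>a<n. p n M a \<in> borel_measurable \<mu> \<and>
               has_bochner_integral \<mu> (\<lambda>l. p n M a l *\<^sub>R S l) (assemblage \<rho> M a)))"

end

theory Submission
  imports Defs
begin

text \<open>
  Let \<open>s(\<lambda>)\<close> be the Bloch vector of the hidden state \<open>S(\<lambda>)\<close>, so \<open>\<bar>s(\<lambda>)\<bar> \<le> 1\<close>.  Measuring
  \<open>(I \<plusminus> u\<cdot>\<sigma>)/2\<close> on Alice's side and comparing the two outcomes with the model gives
  \<open>u\<cdot>T w \<le> E\<bar>s\<cdot>w\<bar>\<close> for every unit vector \<open>u\<close>, hence \<open>\<bar>T w\<bar> \<le> E\<bar>s\<cdot>w\<bar>\<close>.  Integrate over
  the unit sphere, in spherical coordinates relative to an orthonormal eigenframe of \<open>T\<^sup>T T\<close>: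
  the left side gives \<open>4\<pi> R\<^sub>G(\<tau>\<^sub>3\<^sup>2, \<tau>\<^sub>2\<^sup>2, \<tau>\<^sub>1\<^sup>2)\<close>; on the right, after exchanging the
  integrals, \<open>\<integral>\<bar>s\<cdot>w\<bar> dw = 2\<pi>\<bar>s\<bar> \<le> 2\<pi>\<close>.  That identity follows by rotating \<open>s\<close> onto the
  polar axis; rotation invariance is obtained by smoothing \<open>\<bar>x\<bar>\<close> to \<open>sqrt (x\<^sup>2 + \<epsilon>)\<close>, whose
  derivative along a coordinate rotation is a total derivative in the angles.
\<close>

section \<open>Symmetric \<open>3 \<times> 3\<close> matrices\<close>

lemma cauchy_schwarz3:
  fixes a1 a2 a3 z1 z2 z3 :: real
  shows "(a1 * z1 + a2 * z2 + a3 * z3)\<^sup>2 \<le> (a1\<^sup>2 + a2\<^sup>2 + a3\<^sup>2) * (z1\<^sup>2 + z2\<^sup>2 + z3\<^sup>2)"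
proof -
  have "(a1\<^sup>2 + a2\<^sup>2 + a3\<^sup>2) * (z1\<^sup>2 + z2\<^sup>2 + z3\<^sup>2) - (a1 * z1 + a2 * z2 + a3 * z3)\<^sup>2
     = (a1 * z2 - a2 * z1)\<^sup>2 + (a1 * z3 - a3 * z1)\<^sup>2 + (a2 * z3 - a3 * z2)\<^sup>2"
    by (simp add: power2_eq_square algebra_simps)
  then show ?thesis
    by (smt (verit) zero_le_power2)
qed

lemma orthonormal3_sum_sq_inner_le:
  fixes u1 u2 u3 x :: "'a::real_inner"
  assumes "u1 \<bullet> u1 = 1" "u2 \<bullet> u2 = 1" "u3 \<bullet> u3 = 1" "u1 \<bullet> u2 = 0" "u1 \<bullet> u3 = 0" "u2 \<bullet> u3 = 0"
  shows "(x \<bullet> u1)\<^sup>2 + (x \<bullet> u2)\<^sup>2 + (x \<bullet> u3)\<^sup>2 \<le> x \<bullet> x"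
proof -
  define y where "y = x - ((x \<bullet> u1) *\<^sub>R u1 + (x \<bullet> u2) *\<^sub>R u2 + (x \<bullet> u3) *\<^sub>R u3)"
  have "0 \<le> y \<bullet> y" by simp
  also have "y \<bullet> y = x \<bullet> x - ((x \<bullet> u1)\<^sup>2 + (x \<bullet> u2)\<^sup>2 + (x \<bullet> u3)\<^sup>2)"
    using assms unfolding y_def
    by (simp add: inner_add_left inner_add_right inner_diff_left inner_diff_right
        power2_eq_square inner_commute algebra_simps)
  finally show ?thesis by simp
qed

lemma charpoly3:
  fixes A :: "real^3^3"
  shows "det (mat x - A) = x^3 - (A$1$1 + A$2$2 + A$3$3) * x\<^sup>2
     + (A$1$1 * A$2$2 + A$1$1 * A$3$3 + A$2$2 * A$3$3 - A$1$2 * A$2$1 - A$1$3 * A$3$1 - A$2$3 * A$3$2) * x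
     - det A"
  by (simp add: det_3 mat_def power2_eq_square power3_eq_cube algebra_simps)

lemma charpoly3_coeffs:
  fixes A :: "real^3^3"
  assumes "\<And>x. det (mat x - A) = (x - a) * (x - b) * (x - c)"
  shows "A$1$1 + A$2$2 + A$3$3 = a + b + c"
    and "A$1$1 * A$2$2 + A$1$1 * A$3$3 + A$2$2 * A$3$3 - A$1$2 * A$2$1 - A$1$3 * A$3$1 - A$2$3 * A$3$2
      = a * b + a * c + b * c"
proof -
  have at: "x^3 - (A$1$1 + A$2$2 + A$3$3) * x\<^sup>2
     + (A$1$1 * A$2$2 + A$1$1 * A$3$3 + A$2$2 * A$3$3 - A$1$2 * A$2$1 - A$1$3 * A$3$1 - A$2$3 * A$3$2) * x
     - det A = (x - a) * (x - b) * (x - c)" for x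
    using assms[of x] by (simp add: charpoly3)
  show "A$1$1 + A$2$2 + A$3$3 = a + b + c"
    "A$1$1 * A$2$2 + A$1$1 * A$3$3 + A$2$2 * A$3$3 - A$1$2 * A$2$1 - A$1$3 * A$3$1 - A$2$3 * A$3$2
      = a * b + a * c + b * c"
    using at[of 0] at[of 1] at[of "-1"] by (simp_all add: algebra_simps power2_eq_square power3_eq_cube)
qed

lemma mat_mult_vector: "mat r *v x = r *\<^sub>R x"
  by (simp add: vec_eq_iff matrix_vector_mult_def mat_def if_distrib if_distribR cong del: if_weak_cong)

lemma symmetric_matrix_inner_commute:
  fixes A :: "real^'n^'n"
  assumes "transpose A = A"
  shows "(A *v x) \<bullet> y = x \<bullet> (A *v y)"
  by (metis assms dot_lmul_matrix vector_transpose_matrix)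

lemma exists_unit_eigenvector:
  fixes A :: "real^'n^'n"
  assumes "det (mat r - A) = 0"
  obtains v where "v \<bullet> v = 1" "A *v v = r *\<^sub>R v"
proof -
  have "\<not> (\<exists>B. B ** (mat r - A) = mat 1)"
    using assms invertible_det_nz invertible_left_inverse by blast
  then obtain x where x: "(mat r - A) *v x = 0" "x \<noteq> 0"
    using matrix_left_invertible_ker by blast
  have Ax: "A *v x = r *\<^sub>R x"
    using x(1) by (simp add: matrix_vector_mult_diff_rdistrib mat_mult_vector)
  show ?thesis
  proof
    show "((1 / norm x) *\<^sub>R x) \<bullet> ((1 / norm x) *\<^sub>R x) = 1"
      using x(2) by (simp add: dot_square_norm power2_eq_square)
    show "A *v ((1 / norm x) *\<^sub>R x) = r *\<^sub>R ((1 / norm x) *\<^sub>R x)"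
      by (simp add: matrix_vector_mult_scaleR Ax)
  qed
qed

lemma orthogonal_pair_eq_cross3_multiple:
  fixes u v y :: "real^3"
  assumes "u \<bullet> u = 1" "v \<bullet> v = 1" "u \<bullet> v = 0" "y \<bullet> u = 0" "y \<bullet> v = 0"
  shows "y = (y \<bullet> cross3 u v) *\<^sub>R cross3 u v"
proof -
  define n where "n = cross3 u v"
  have nn: "n \<bullet> n = 1"
    using norm_cross[of u v] assms unfolding n_def by (simp add: power2_norm_eq_inner)
  have "cross3 n y = 0"
    using Lagrange[of y u v] assms cross_skew[of n y] unfolding n_def by simp
  then have "(y \<bullet> n)\<^sup>2 = y \<bullet> y"
    using norm_cross_dot[of n y] nn by (simp add: power_mult_distrib power2_norm_eq_inner inner_commute)
  then have "(y - (y \<bullet> n) *\<^sub>R n) \<bullet> (y - (y \<bullet> n) *\<^sub>R n) = 0"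
    using nn by (simp add: inner_diff_left inner_diff_right inner_commute power2_eq_square algebra_simps)
  then show ?thesis unfolding n_def by simp
qed

lemma orthonormal3_expansion:
  fixes u1 u3 x :: "real^3"
  assumes "u1 \<bullet> u1 = 1" "u3 \<bullet> u3 = 1" "u1 \<bullet> u3 = 0"
  shows "x = (x \<bullet> u1) *\<^sub>R u1 + (x \<bullet> cross3 u3 u1) *\<^sub>R cross3 u3 u1 + (x \<bullet> u3) *\<^sub>R u3"
proof -
  define y where "y = x - (x \<bullet> u1) *\<^sub>R u1 - (x \<bullet> u3) *\<^sub>R u3"
  have "u3 \<bullet> u1 = 0" using assms(3) by (simp add: inner_commute)
  then have "y \<bullet> u3 = 0" "y \<bullet> u1 = 0"
    using assms unfolding y_def by (simp_all add: inner_diff_left)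
  then have "y = (y \<bullet> cross3 u3 u1) *\<^sub>R cross3 u3 u1"
    using assms by (intro orthogonal_pair_eq_cross3_multiple) (simp_all add: inner_commute)
  also have "y \<bullet> cross3 u3 u1 = x \<bullet> cross3 u3 u1"
    unfolding y_def by (simp add: inner_diff_left dot_cross_self)
  finally show ?thesis unfolding y_def by (simp add: algebra_simps)
qed

lemma trace3_eq_sum_orthonormal:
  fixes A :: "real^3^3"
  assumes "\<And>x. x = (x \<bullet> u1) *\<^sub>R u1 + (x \<bullet> u2) *\<^sub>R u2 + (x \<bullet> u3) *\<^sub>R u3"
  shows "u1 \<bullet> (A *v u1) + u2 \<bullet> (A *v u2) + u3 \<bullet> (A *v u3) = A$1$1 + A$2$2 + A$3$3"
proof -
  have delta: "u1$i * u1$j + u2$i * u2$j + u3$i * u3$j = (if i = j then 1 else 0)" for i j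
    using arg_cong[OF assms[of "axis i (1::real)"], of "\<lambda>v. v $ j"]
    by (simp add: inner_axis') (auto simp: axis_def)
  have "u1 \<bullet> (A *v u1) + u2 \<bullet> (A *v u2) + u3 \<bullet> (A *v u3)
      = (\<Sum>i\<in>UNIV. \<Sum>j\<in>UNIV. A$i$j * (u1$i * u1$j + u2$i * u2$j + u3$i * u3$j))"
    by (simp add: inner_vec_def matrix_vector_mult_def sum_distrib_left sum.distrib algebra_simps)
  also have "\<dots> = A$1$1 + A$2$2 + A$3$3"
    by (simp add: delta sum_3 if_distrib cong: if_cong)
  finally show ?thesis .
qed

lemma symmetric3_eq_scalar:
  fixes A :: "real^3^3"
  assumes sym: "transpose A = A" and charpoly: "\<And>x. det (mat x - A) = (x - a) * (x - a) * (x - a)"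
  shows "A = mat a"
proof -
  have A_sym: "A$j$i = A$i$j" for i j
    using arg_cong[OF sym, of "\<lambda>M. M$i$j"] by (simp add: transpose_def)
  note coeffs = charpoly3_coeffs[OF charpoly]
  have "(A$1$1 - a)\<^sup>2 + (A$2$2 - a)\<^sup>2 + (A$3$3 - a)\<^sup>2 + 2 * (A$1$2)\<^sup>2 + 2 * (A$1$3)\<^sup>2 + 2 * (A$2$3)\<^sup>2
      = (A$1$1 + A$2$2 + A$3$3)\<^sup>2 - 2 * a * (A$1$1 + A$2$2 + A$3$3) + 3 * a\<^sup>2
        - 2 * (A$1$1 * A$2$2 + A$1$1 * A$3$3 + A$2$2 * A$3$3 - A$1$2 * A$2$1 - A$1$3 * A$3$1 - A$2$3 * A$3$2)"
    by (simp add: A_sym[of 1 2] A_sym[of 1 3] A_sym[of 2 3] power2_eq_square algebra_simps)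
  also have "\<dots> = 0"
    unfolding coeffs by (simp add: power2_eq_square algebra_simps)
  finally have "(A$1$1 - a)\<^sup>2 = 0 \<and> (A$2$2 - a)\<^sup>2 = 0 \<and> (A$3$3 - a)\<^sup>2 = 0
      \<and> (A$1$2)\<^sup>2 = 0 \<and> (A$1$3)\<^sup>2 = 0 \<and> (A$2$3)\<^sup>2 = 0"
    using zero_le_power2[of "A$1$1 - a"] zero_le_power2[of "A$2$2 - a"] zero_le_power2[of "A$3$3 - a"]
      zero_le_power2[of "A$1$2"] zero_le_power2[of "A$1$3"] zero_le_power2[of "A$2$3"]
    by linarith
  then have "A$1$1 = a \<and> A$2$2 = a \<and> A$3$3 = a \<and> A$1$2 = 0 \<and> A$1$3 = 0 \<and> A$2$3 = 0"
    by simp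
  then have "A$i$j = (if i = j then a else 0)" for i j
    using A_sym[of 1 2] A_sym[of 1 3] A_sym[of 2 3] exhaust_3[of i] exhaust_3[of j] by auto
  then show ?thesis by (simp add: vec_eq_iff mat_def)
qed

lemma symmetric3_orthonormal_eigenbasis:
  fixes A :: "real^3^3"
  assumes sym: "transpose A = A" and "c \<le> b" "b \<le> a"
    and charpoly: "\<And>x. det (mat x - A) = (x - a) * (x - b) * (x - c)"
  obtains u1 u2 u3 :: "real^3"
  where "u1 \<bullet> u1 = 1" "u2 \<bullet> u2 = 1" "u3 \<bullet> u3 = 1" "u1 \<bullet> u2 = 0" "u1 \<bullet> u3 = 0" "u2 \<bullet> u3 = 0"
    and "A *v u1 = c *\<^sub>R u1" "A *v u2 = b *\<^sub>R u2" "A *v u3 = a *\<^sub>R u3"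
proof (cases "a = c")
  case True
  then have "b = a" "c = a" using assms(2,3) by auto
  then have "A = mat a"
    using symmetric3_eq_scalar[OF sym] charpoly by metis
  then show ?thesis
    using that[of "axis 1 1" "axis 2 1" "axis 3 1"] \<open>b = a\<close> \<open>c = a\<close>
    by (simp add: mat_mult_vector inner_axis_axis)
next
  case False
  obtain u3 where u3: "u3 \<bullet> u3 = 1" "A *v u3 = a *\<^sub>R u3"
    using exists_unit_eigenvector[of a A] charpoly by auto
  obtain u1 where u1: "u1 \<bullet> u1 = 1" "A *v u1 = c *\<^sub>R u1"
    using exists_unit_eigenvector[of c A] charpoly by auto
  have "c * (u1 \<bullet> u3) = a * (u1 \<bullet> u3)"
    using symmetric_matrix_inner_commute[OF sym, of u1 u3] u1 u3 by simp
  then have u13: "u1 \<bullet> u3 = 0" using False by simp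
  define u2 where "u2 = cross3 u3 u1"
  have u2: "u2 \<bullet> u2 = 1" "u1 \<bullet> u2 = 0" "u2 \<bullet> u3 = 0"
    using norm_cross[of u3 u1] u1 u3 u13
    by (simp_all add: u2_def power2_norm_eq_inner inner_commute dot_cross_self)
  have expansion: "x = (x \<bullet> u1) *\<^sub>R u1 + (x \<bullet> u2) *\<^sub>R u2 + (x \<bullet> u3) *\<^sub>R u3" for x
    unfolding u2_def by (rule orthonormal3_expansion[OF u1(1) u3(1) u13])
  define \<kappa> where "\<kappa> = (A *v u2) \<bullet> u2"
  have "(A *v u2) \<bullet> u1 = 0" "(A *v u2) \<bullet> u3 = 0"
    using symmetric_matrix_inner_commute[OF sym, of u2] u1 u3 u2 by (simp_all add: inner_commute)
  then have Au2: "A *v u2 = \<kappa> *\<^sub>R u2"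
    using expansion[of "A *v u2"] unfolding \<kappa>_def by simp
  have "c + \<kappa> + a = a + b + c"
    using trace3_eq_sum_orthonormal[OF expansion, of A] charpoly3_coeffs(1)[OF charpoly] u1 u2 u3 Au2
    by simp
  then have "A *v u2 = b *\<^sub>R u2" using Au2 by simp
  then show ?thesis using that u1 u2 u3 u13 by blast
qed

lemma singular_values3_orthonormal_frame:
  assumes "singular_values3 T \<tau>1 \<tau>2 \<tau>3"
  obtains u1 u2 u3 :: "real^3"
  where "u1 \<bullet> u1 = 1" "u2 \<bullet> u2 = 1" "u3 \<bullet> u3 = 1" "u1 \<bullet> u2 = 0" "u1 \<bullet> u3 = 0" "u2 \<bullet> u3 = 0"
    and "\<And>z1 z2 z3. norm (T *v (z1 *\<^sub>R u1 + z2 *\<^sub>R u2 + z3 *\<^sub>R u3))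
      = sqrt (\<tau>3\<^sup>2 * z1\<^sup>2 + \<tau>2\<^sup>2 * z2\<^sup>2 + \<tau>1\<^sup>2 * z3\<^sup>2)"
proof -
  define A where "A = transpose T ** T"
  have "transpose A = A"
    unfolding A_def by (simp add: matrix_transpose_mul)
  moreover have "\<tau>3\<^sup>2 \<le> \<tau>2\<^sup>2" "\<tau>2\<^sup>2 \<le> \<tau>1\<^sup>2"
    and "\<And>x. det (mat x - A) = (x - \<tau>1\<^sup>2) * (x - \<tau>2\<^sup>2) * (x - \<tau>3\<^sup>2)"
    using assms unfolding singular_values3_def A_def by (auto intro!: power_mono)
  ultimately obtain u1 u2 u3 :: "real^3"
    where on: "u1 \<bullet> u1 = 1" "u2 \<bullet> u2 = 1" "u3 \<bullet> u3 = 1" "u1 \<bullet> u2 = 0" "u1 \<bullet> u3 = 0" "u2 \<bullet> u3 = 0"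
    and eigen: "A *v u1 = \<tau>3\<^sup>2 *\<^sub>R u1" "A *v u2 = \<tau>2\<^sup>2 *\<^sub>R u2" "A *v u3 = \<tau>1\<^sup>2 *\<^sub>R u3"
    by (rule symmetric3_orthonormal_eigenbasis)
  have "norm (T *v (z1 *\<^sub>R u1 + z2 *\<^sub>R u2 + z3 *\<^sub>R u3))
      = sqrt (\<tau>3\<^sup>2 * z1\<^sup>2 + \<tau>2\<^sup>2 * z2\<^sup>2 + \<tau>1\<^sup>2 * z3\<^sup>2)" for z1 z2 z3
  proof -
    define v where "v = z1 *\<^sub>R u1 + z2 *\<^sub>R u2 + z3 *\<^sub>R u3"
    have "(norm (T *v v))\<^sup>2 = (v v* transpose T) \<bullet> (T *v v)"
      by (simp add: power2_norm_eq_inner)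
    also have "\<dots> = v \<bullet> (A *v v)"
      unfolding dot_lmul_matrix A_def by (simp add: matrix_vector_mul_assoc)
    also have "\<dots> = \<tau>3\<^sup>2 * z1\<^sup>2 + \<tau>2\<^sup>2 * z2\<^sup>2 + \<tau>1\<^sup>2 * z3\<^sup>2"
      using on by (simp add: v_def matrix_vector_right_distrib matrix_vector_mult_scaleR eigen
          inner_add_left inner_add_right inner_commute power2_eq_square algebra_simps)
    finally show ?thesis
      unfolding v_def[symmetric] by (metis norm_ge_zero real_sqrt_unique)
  qed
  with on that show ?thesis by blast
qed

section \<open>Qubit observables\<close>

lemma sum_UNIV_2x2: "sum f (UNIV :: (2 \<times> 2) set) = f (1, 1) + f (1, 2) + f (2, 1) + f (2, 2)"
proof -
  have UNIV_eq: "(UNIV :: (2 \<times> 2) set) = {(1, 1), (1, 2), (2, 1), (2, 2)}"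
    using exhaust_2 by auto
  show ?thesis unfolding UNIV_eq by (simp add: add.assoc)
qed

lemma index_simps: "(3::3) = 0" "(1::3) \<noteq> 0" "(2::3) \<noteq> 0" "(2::2) = 0" "(1::2) \<noteq> 0"
  by simp_all

lemma trace_ptrace_A_kron: "trace (ptrace_A (kron M (mat 1) ** \<rho>) ** W) = trace (\<rho> ** kron M W)"
  by (simp add: trace_def ptrace_A_def kron_def matrix_matrix_mult_def mat_def sum_UNIV_2x2 sum_2
      algebra_simps)

lemma trace_kron_diff: "trace (\<rho> ** kron A W) - trace (\<rho> ** kron B W) = trace (\<rho> ** kron (A - B) W)"
  by (simp add: trace_def kron_def matrix_matrix_mult_def sum_UNIV_2x2 sum_2 algebra_simps)

definition pauli_dot :: "real^3 \<Rightarrow> cmat2" where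
  "pauli_dot u = (\<chi> r c. \<Sum>i\<in>UNIV. complex_of_real (u$i) * pauli i $ r $ c)"

lemma pauli_dot_nth:
  "pauli_dot u $ 1 $ 1 = - complex_of_real (u$2)"
  "pauli_dot u $ 2 $ 2 = complex_of_real (u$2)"
  "pauli_dot u $ 1 $ 2 = complex_of_real (u$0) + \<i> * complex_of_real (u$1)"
  "pauli_dot u $ 2 $ 1 = complex_of_real (u$0) - \<i> * complex_of_real (u$1)"
  by (simp_all add: pauli_dot_def sum_3 pauli_def sigma1_def sigma2_def sigma3_def index_simps)

lemma Re_trace_kron_pauli_dot:
  "Re (trace (\<rho> ** kron (pauli_dot u) (pauli_dot w))) = u \<bullet> (corr_matrix \<rho> *v w)"
  by (simp add: trace_def kron_def matrix_matrix_mult_def sum_UNIV_2x2 sum_2 sum_3 pauli_dot_def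
      corr_matrix_def inner_vec_def matrix_vector_mult_def pauli_def sigma1_def sigma2_def sigma3_def
      index_simps algebra_simps)

definition bloch_vector :: "cmat2 \<Rightarrow> real^3" where
  "bloch_vector X = (\<chi> j. Re (trace (X ** pauli j)))"

lemma Re_trace_pauli_dot: "Re (trace (X ** pauli_dot w)) = bloch_vector X \<bullet> w"
  by (simp add: trace_def matrix_matrix_mult_def sum_2 sum_3 pauli_dot_def bloch_vector_def inner_vec_def
      pauli_def sigma1_def sigma2_def sigma3_def index_simps algebra_simps)

lemma psd2_entries:
  fixes S :: cmat2
  assumes "psd S"
  shows "Im (S$1$1) = 0" "0 \<le> Re (S$1$1)" "Im (S$2$2) = 0" "0 \<le> Re (S$2$2)" "S$2$1 = cnj (S$1$2)"
    and "0 \<le> Re (S$1$1) * (Re (S$1$1) * Re (S$2$2) - ((Re (S$1$2))\<^sup>2 + (Im (S$1$2))\<^sup>2))"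
    and "0 \<le> Re (S$2$2) * (Re (S$1$1) * Re (S$2$2) - ((Re (S$1$2))\<^sup>2 + (Im (S$1$2))\<^sup>2))"
proof -
  define Q where "Q v = (\<Sum>i\<in>UNIV. \<Sum>j\<in>UNIV. cnj (v $ i) * S $ i $ j * v $ j)" for v :: "complex^2"
  have Q_nonneg: "Im (Q v) = 0 \<and> 0 \<le> Re (Q v)" for v
    using assms unfolding psd_def Q_def by blast
  define p q c d where "p = S$1$1" and "q = S$2$2" and "c = S$1$2" and "d = S$2$1"
  have Q_eq: "Q v = cnj (v$1) * p * v$1 + cnj (v$1) * c * v$2 + cnj (v$2) * d * v$1 + cnj (v$2) * q * v$2" for v
    unfolding Q_def p_def q_def c_def d_def by (simp add: sum_2 algebra_simps)
  show p: "Im (S$1$1) = 0" "0 \<le> Re (S$1$1)"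
    using Q_nonneg[of "vector [1, 0]"] by (simp_all add: Q_eq p_def)
  show q: "Im (S$2$2) = 0" "0 \<le> Re (S$2$2)"
    using Q_nonneg[of "vector [0, 1]"] by (simp_all add: Q_eq q_def)
  have "Im d = - Im c" using Q_nonneg[of "vector [1, 1]"] p q by (simp add: Q_eq p_def q_def)
  moreover have "Re d = Re c"
    using Q_nonneg[of "vector [1, \<i>]"] p q by (simp add: Q_eq p_def q_def algebra_simps)
  ultimately show d: "S$2$1 = cnj (S$1$2)" by (simp add: c_def d_def complex_eq_iff)
  show "0 \<le> Re (S$1$1) * (Re (S$1$1) * Re (S$2$2) - ((Re (S$1$2))\<^sup>2 + (Im (S$1$2))\<^sup>2))"
    using Q_nonneg[of "vector [- c, p]"] p q d
    by (simp add: Q_eq p_def q_def c_def d_def power2_eq_square algebra_simps)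
  show "0 \<le> Re (S$2$2) * (Re (S$1$1) * Re (S$2$2) - ((Re (S$1$2))\<^sup>2 + (Im (S$1$2))\<^sup>2))"
    using Q_nonneg[of "vector [q, - cnj c]"] p q d
    by (simp add: Q_eq p_def q_def c_def d_def power2_eq_square algebra_simps)
qed

lemma norm_bloch_vector_le_1:
  assumes "density_matrix S"
  shows "norm (bloch_vector S) \<le> 1"
proof -
  define p q c where "p = Re (S$1$1)" and "q = Re (S$2$2)" and "c = S$1$2"
  have psd: "psd S" and "trace S = 1" using assms by (auto simp: density_matrix_def)
  note entries = psd2_entries[OF psd, folded p_def q_def c_def]
  have trace: "p + q = 1"
    using \<open>trace S = 1\<close> unfolding trace_def p_def q_def by (simp add: sum_2 complex_eq_iff)
  have "0 \<le> (p + q) * (p * q - ((Re c)\<^sup>2 + (Im c)\<^sup>2))"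
    using add_nonneg_nonneg[OF entries(6,7)] by (simp add: algebra_simps)
  then have det: "((Re c)\<^sup>2 + (Im c)\<^sup>2) \<le> p * q" using trace by simp
  have "(norm (bloch_vector S))\<^sup>2 = bloch_vector S \<bullet> bloch_vector S"
    by (rule power2_norm_eq_inner)
  also have "\<dots> = (2 * Re c)\<^sup>2 + (2 * Im c)\<^sup>2 + (q - p)\<^sup>2"
    using entries(5) unfolding p_def q_def c_def
    by (simp add: inner_vec_def bloch_vector_def trace_def matrix_matrix_mult_def
        sum_2 sum_3 pauli_def sigma1_def sigma2_def sigma3_def index_simps algebra_simps power2_eq_square)
  also have "\<dots> \<le> (p + q)\<^sup>2"
    using det by (simp add: power2_eq_square algebra_simps)
  finally show ?thesis using trace by (simp add: power_le_one_iff)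
qed

definition pauli_povm :: "real^3 \<Rightarrow> nat \<Rightarrow> cmat2" where
  "pauli_povm u a = (\<chi> r c. ((if r = c then 1 else 0) + (if a = 0 then 1 else -1) * pauli_dot u $ r $ c) / 2)"

lemma psd_pauli_povm:
  assumes "norm u \<le> 1"
  shows "psd (pauli_povm u a)"
  unfolding psd_def
proof
  fix v :: "complex^2"
  define s :: real where "s = (if a = 0 then 1 else -1)"
  define P R X Y where "P = (Re (v$1))\<^sup>2 + (Im (v$1))\<^sup>2" and "R = (Re (v$2))\<^sup>2 + (Im (v$2))\<^sup>2"
    and "X = Re (v$1) * Re (v$2) + Im (v$1) * Im (v$2)" and "Y = Re (v$1) * Im (v$2) - Im (v$1) * Re (v$2)"
  define K where "K = - (u$2) * (P - R) + 2 * (u$0) * X - 2 * (u$1) * Y"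
  have form: "(\<Sum>i\<in>UNIV. \<Sum>j\<in>UNIV. cnj (v $ i) * pauli_povm u a $ i $ j * v $ j)
      = complex_of_real ((P + R + s * K) / 2)"
    unfolding pauli_povm_def s_def
    by (cases "a = 0") (simp_all add: sum_2 pauli_dot_nth complex_eq_iff P_def R_def K_def X_def Y_def
        power2_eq_square field_simps)
  have "(u$0)\<^sup>2 + (u$1)\<^sup>2 + (u$2)\<^sup>2 = (norm u)\<^sup>2"
    unfolding power2_norm_eq_inner by (simp add: inner_vec_def sum_3 index_simps power2_eq_square)
  then have u_le_1: "(u$2)\<^sup>2 + (u$0)\<^sup>2 + (u$1)\<^sup>2 \<le> 1"
    using power_le_one[OF norm_ge_zero assms, of 2] by linarith
  have "K\<^sup>2 \<le> ((u$2)\<^sup>2 + (u$0)\<^sup>2 + (u$1)\<^sup>2) * ((R - P)\<^sup>2 + (2 * X)\<^sup>2 + (2 * Y)\<^sup>2)"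
    using cauchy_schwarz3[of "u$2" "R - P" "u$0" "2 * X" "- (u$1)" "2 * Y"]
    unfolding K_def by (simp add: algebra_simps)
  also have "\<dots> \<le> 1 * (P + R)\<^sup>2"
  proof (rule mult_mono)
    have "X\<^sup>2 + Y\<^sup>2 = P * R"
      unfolding X_def Y_def P_def R_def by (simp add: power2_eq_square algebra_simps)
    then show "(R - P)\<^sup>2 + (2 * X)\<^sup>2 + (2 * Y)\<^sup>2 \<le> (P + R)\<^sup>2"
      by (simp add: power2_eq_square algebra_simps)
  qed (use u_le_1 in auto)
  finally have "K\<^sup>2 \<le> (P + R)\<^sup>2" by simp
  moreover have "P + R \<ge> 0" unfolding P_def R_def by simp
  ultimately have "\<bar>s * K\<bar> \<le> P + R"
    using abs_le_square_iff[of K "P + R"] by (simp add: s_def abs_mult)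
  then show "Im (\<Sum>i\<in>UNIV. \<Sum>j\<in>UNIV. cnj (v $ i) * pauli_povm u a $ i $ j * v $ j) = 0 \<and>
      0 \<le> Re (\<Sum>i\<in>UNIV. \<Sum>j\<in>UNIV. cnj (v $ i) * pauli_povm u a $ i $ j * v $ j)"
    unfolding form by simp
qed

lemma povm_pauli_povm: "norm u \<le> 1 \<Longrightarrow> povm 2 (pauli_povm u)"
  unfolding povm_def
proof (intro conjI allI impI)
  show "(\<Sum>a<2. pauli_povm u a) = mat 1"
    by (simp add: numeral_2_eq_2 pauli_povm_def vec_eq_iff mat_def field_simps)
qed (auto intro: psd_pauli_povm)

lemma pauli_povm_diff: "pauli_povm u 0 - pauli_povm u 1 = pauli_dot u"
  by (simp add: pauli_povm_def vec_eq_iff field_simps)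

lemma Re_trace_scaleR_mult: "Re (trace ((c *\<^sub>R X) ** P)) = c * Re (trace (X ** P))"
  for X P :: cmat2
  by (simp add: trace_def matrix_matrix_mult_def sum_2 algebra_simps)

lemma bounded_linear_Re_trace_mult: "bounded_linear (\<lambda>X::cmat2. Re (trace (X ** P)))"
proof -
  have "linear (\<lambda>X::cmat2. Re (trace (X ** P)))"
    by (rule linearI) (simp_all add: Re_trace_scaleR_mult trace_def matrix_matrix_mult_def sum_2 algebra_simps)
  then show ?thesis by (simp add: linear_conv_bounded_linear)
qed

lemma bounded_linear_bloch_vector: "bounded_linear bloch_vector"
proof -
  have "linear bloch_vector"
    by (rule linearI) (simp_all add: bloch_vector_def vec_eq_iff Re_trace_scaleR_mult trace_def
        matrix_matrix_mult_def sum_2 algebra_simps)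
  then show ?thesis by (simp add: linear_conv_bounded_linear)
qed

lemma borel_measurable_bloch_vector [measurable (raw)]:
  "S \<in> borel_measurable \<mu> \<Longrightarrow> (\<lambda>l. bloch_vector (S l)) \<in> borel_measurable \<mu>"
  using borel_measurable_continuous_onI[OF linear_continuous_on[OF bounded_linear_bloch_vector]]
  by (rule measurable_compose[rotated])

lemma lhs_model_has_integral_inner_corr:
  assumes lhs: "lhs_model \<mu> S p \<rho>" and u: "norm u \<le> 1"
  shows "has_bochner_integral \<mu>
      (\<lambda>l. (p 2 (pauli_povm u) 0 l - p 2 (pauli_povm u) 1 l) * (bloch_vector (S l) \<bullet> w))
      (u \<bullet> (corr_matrix \<rho> *v w))"
proof -
  define \<Lambda> where "\<Lambda> X = Re (trace (X ** pauli_dot w))" for X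
  have outcome_integral: "has_bochner_integral \<mu> (\<lambda>l. p 2 (pauli_povm u) a l * (bloch_vector (S l) \<bullet> w))
      (\<Lambda> (assemblage \<rho> (pauli_povm u) a))" if "a < 2" for a
  proof -
    have "has_bochner_integral \<mu> (\<lambda>l. p 2 (pauli_povm u) a l *\<^sub>R S l) (assemblage \<rho> (pauli_povm u) a)"
      using lhs povm_pauli_povm[OF u] that unfolding lhs_model_def by blast
    from has_bochner_integral_bounded_linear[OF bounded_linear_Re_trace_mult[of "pauli_dot w"] this] show ?thesis
      unfolding \<Lambda>_def Re_trace_scaleR_mult by (simp only: Re_trace_pauli_dot)
  qed
  have "\<Lambda> (assemblage \<rho> (pauli_povm u) 0) - \<Lambda> (assemblage \<rho> (pauli_povm u) 1)
      = Re (trace (\<rho> ** kron (pauli_povm u 0) (pauli_dot w)) - trace (\<rho> ** kron (pauli_povm u 1) (pauli_dot w)))"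
    unfolding \<Lambda>_def assemblage_def trace_ptrace_A_kron by simp
  also have "\<dots> = u \<bullet> (corr_matrix \<rho> *v w)"
    unfolding trace_kron_diff pauli_povm_diff by (rule Re_trace_kron_pauli_dot)
  finally show ?thesis
    using has_bochner_integral_diff[OF outcome_integral[of 0] outcome_integral[of 1]]
    by (simp add: left_diff_distrib)
qed

lemma lhs_model_inner_corr_le:
  assumes lhs: "lhs_model \<mu> S p \<rho>" and u: "norm u \<le> 1"
  shows "u \<bullet> (corr_matrix \<rho> *v w) \<le> (\<integral>l. \<bar>bloch_vector (S l) \<bullet> w\<bar> \<partial>\<mu>)"
proof -
  have "prob_space \<mu>" and S_measurable: "S \<in> borel_measurable \<mu>"
    and S_density: "\<And>l. l \<in> space \<mu> \<Longrightarrow> density_matrix (S l)"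
    and p: "\<And>l. l \<in> space \<mu> \<Longrightarrow> (\<forall>a<2. 0 \<le> p 2 (pauli_povm u) a l) \<and> (\<Sum>a<2. p 2 (pauli_povm u) a l) = 1"
    using lhs povm_pauli_povm[OF u] unfolding lhs_model_def by blast+
  interpret prob_space \<mu> by fact
  define b where "b l = bloch_vector (S l) \<bullet> w" for l
  note integral = lhs_model_has_integral_inner_corr[OF lhs u, of w, folded b_def]
  have "integrable \<mu> (\<lambda>l. \<bar>b l\<bar>)"
  proof (rule integrable_const_bound)
    show "AE l in \<mu>. norm \<bar>b l\<bar> \<le> norm w"
    proof (rule AE_I2)
      fix l assume "l \<in> space \<mu>"
      have "\<bar>b l\<bar> \<le> norm (bloch_vector (S l)) * norm w"
        unfolding b_def by (rule Cauchy_Schwarz_ineq2)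
      also have "\<dots> \<le> norm w"
        using norm_bloch_vector_le_1[OF S_density[OF \<open>l \<in> space \<mu>\<close>]] by (simp add: mult_left_le_one_le)
      finally show "norm \<bar>b l\<bar> \<le> norm w" by simp
    qed
    show "(\<lambda>l. \<bar>b l\<bar>) \<in> borel_measurable \<mu>"
      unfolding b_def using S_measurable by measurable
  qed
  then have "(\<integral>l. (p 2 (pauli_povm u) 0 l - p 2 (pauli_povm u) 1 l) * b l \<partial>\<mu>) \<le> (\<integral>l. \<bar>b l\<bar> \<partial>\<mu>)"
  proof (rule integral_mono[OF integrable.intros[OF integral]])
    fix l assume "l \<in> space \<mu>"
    then have "0 \<le> p 2 (pauli_povm u) 0 l" "0 \<le> p 2 (pauli_povm u) 1 l"
      "p 2 (pauli_povm u) 0 l + p 2 (pauli_povm u) 1 l = 1"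
      using p by (auto simp: numeral_2_eq_2)
    then have "\<bar>p 2 (pauli_povm u) 0 l - p 2 (pauli_povm u) 1 l\<bar> \<le> 1"
      by linarith
    then have "\<bar>p 2 (pauli_povm u) 0 l - p 2 (pauli_povm u) 1 l\<bar> * \<bar>b l\<bar> \<le> \<bar>b l\<bar>"
      by (simp add: mult_left_le_one_le)
    then show "(p 2 (pauli_povm u) 0 l - p 2 (pauli_povm u) 1 l) * b l \<le> \<bar>b l\<bar>"
      by (metis abs_ge_self abs_mult order_trans)
  qed
  then show ?thesis
    using integral by (simp add: has_bochner_integral_iff b_def)
qed

lemma lhs_model_norm_corr_le:
  assumes "lhs_model \<mu> S p \<rho>"
  shows "norm (corr_matrix \<rho> *v w) \<le> (\<integral>l. \<bar>bloch_vector (S l) \<bullet> w\<bar> \<partial>\<mu>)"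
proof (cases "corr_matrix \<rho> *v w = 0")
  case True
  then show ?thesis by (simp add: integral_nonneg_AE)
next
  case False
  define u where "u = (1 / norm (corr_matrix \<rho> *v w)) *\<^sub>R (corr_matrix \<rho> *v w)"
  have "norm (corr_matrix \<rho> *v w) = u \<bullet> (corr_matrix \<rho> *v w)"
    using False by (simp add: u_def dot_square_norm power2_eq_square)
  also have "\<dots> \<le> (\<integral>l. \<bar>bloch_vector (S l) \<bullet> w\<bar> \<partial>\<mu>)"
    using False by (intro lhs_model_inner_corr_le[OF assms]) (simp add: u_def)
  finally show ?thesis .
qed

section \<open>Integrals over the unit sphere\<close>

definition sph_inner :: "real \<Rightarrow> real \<Rightarrow> real \<Rightarrow> real \<Rightarrow> real \<Rightarrow> real" where
  "sph_inner c1 c2 c3 \<phi> \<theta> = c1 * sin \<theta> * cos \<phi> + c2 * sin \<theta> * sin \<phi> + c3 * cos \<theta>"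

abbreviation angle_box :: "(real \<times> real) set" where
  "angle_box \<equiv> cbox (0, 0) (2 * pi, pi)"

lemma continuous_on_sph_inner [continuous_intros]:
  fixes a b c f g :: "'a::t2_space \<Rightarrow> real"
  assumes "continuous_on S a" "continuous_on S b" "continuous_on S c"
    and "continuous_on S f" "continuous_on S g"
  shows "continuous_on S (\<lambda>x. sph_inner (a x) (b x) (c x) (f x) (g x))"
  unfolding sph_inner_def by (intro continuous_intros assms)

lemma sin_snd_nonneg_angle_box: "t \<in> angle_box \<Longrightarrow> 0 \<le> sin (snd t)"
  by (cases t) (auto intro!: sin_ge_zero simp: cbox_Pair_iff)

lemma integral_eq_antiderivative_diff:
  fixes F :: "real \<Rightarrow> real"
  assumes "a \<le> b" and "\<And>x. x \<in> {a..b} \<Longrightarrow> (F has_real_derivative f x) (at x)"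
  shows "integral {a..b} f = F b - F a"
proof -
  have "(f has_integral (F b - F a)) {a..b}"
    using assms by (intro fundamental_theorem_of_calculus)
      (auto simp flip: has_real_derivative_iff_has_vector_derivative intro: has_field_derivative_at_within)
  then show ?thesis by (rule integral_unique)
qed

lemma integral_angle_box_total_derivative_eq_0:
  fixes F G F' G' :: "real \<Rightarrow> real \<Rightarrow> real"
  assumes F': "\<And>\<phi> \<theta>. ((\<lambda>\<theta>. F \<phi> \<theta>) has_real_derivative F' \<phi> \<theta>) (at \<theta>)"
    and G': "\<And>\<phi> \<theta>. ((\<lambda>\<phi>. G \<phi> \<theta>) has_real_derivative G' \<phi> \<theta>) (at \<phi>)"
    and F'_cont: "continuous_on angle_box (\<lambda>t. F' (fst t) (snd t))"
    and G'_cont: "continuous_on angle_box (\<lambda>t. G' (fst t) (snd t))"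
    and F_boundary: "\<And>\<phi>. F \<phi> pi = F \<phi> 0" and G_boundary: "\<And>\<theta>. G (2 * pi) \<theta> = G 0 \<theta>"
  shows "integral angle_box (\<lambda>t. F' (fst t) (snd t) - G' (fst t) (snd t)) = 0"
proof -
  have "integral {0..pi} (F' \<phi>) = F \<phi> pi - F \<phi> 0" for \<phi>
    by (rule integral_eq_antiderivative_diff) (use F' in auto)
  then have F'_integral: "integral angle_box (\<lambda>t. F' (fst t) (snd t)) = 0"
    using integral_prod_continuous[OF F'_cont] F_boundary by simp
  have "integral {0..2 * pi} (\<lambda>\<phi>. G' \<phi> \<theta>) = G (2 * pi) \<theta> - G 0 \<theta>" for \<theta>
    by (rule integral_eq_antiderivative_diff) (use G' in auto)
  then have G'_integral: "integral angle_box (\<lambda>t. G' (fst t) (snd t)) = 0"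
    using integral_prod_continuous[OF G'_cont] integral_swap_continuous[of 0 0 "2 * pi" pi G'] G'_cont
      G_boundary by (simp add: case_prod_beta')
  show ?thesis
    using F'_integral G'_integral F'_cont G'_cont by (simp add: integral_diff integrable_continuous)
qed

lemma has_real_derivative_sqrt_sq_add:
  assumes "\<epsilon> > 0" and "(g has_real_derivative g') (at x)"
  shows "((\<lambda>x. sqrt ((g x)\<^sup>2 + \<epsilon>)) has_real_derivative g x * g' / sqrt ((g x)\<^sup>2 + \<epsilon>)) (at x)"
proof -
  have "(g x)\<^sup>2 + \<epsilon> > 0" using assms(1) by (simp add: add_nonneg_pos)
  then show ?thesis
    by (auto intro!: derivative_eq_intros assms(2) simp: field_simps)
qed

lemma integral_parametric_constant:
  fixes f fx :: "real \<Rightarrow> 'b::euclidean_space \<Rightarrow> real"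
  assumes "\<And>\<alpha> t. ((\<lambda>\<alpha>. f \<alpha> t) has_real_derivative fx \<alpha> t) (at \<alpha>)"
    and "\<And>\<alpha>. continuous_on (cbox a b) (f \<alpha>)"
    and "continuous_on (UNIV \<times> cbox a b) (\<lambda>(\<alpha>, t). fx \<alpha> t)"
    and "\<And>\<alpha>. integral (cbox a b) (fx \<alpha>) = 0"
  shows "integral (cbox a b) (f \<alpha>) = integral (cbox a b) (f 0)"
proof -
  have "((\<lambda>\<alpha>. integral (cbox a b) (f \<alpha>)) has_real_derivative integral (cbox a b) (fx \<alpha>)) (at \<alpha>)"
    for \<alpha>
    by (rule leibniz_rule_field_derivative[where U=UNIV])
      (use assms in \<open>auto intro: integrable_continuous\<close>)
  then show ?thesis using assms(4) by (intro DERIV_isconst_all) auto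
qed

lemma sqrt_sq_add_pos: "\<epsilon> > 0 \<Longrightarrow> 0 < sqrt (x\<^sup>2 + \<epsilon>)"
  by (simp add: add_nonneg_pos)

lemma has_real_derivative_smoothed_sph_inner_\<theta>:
  assumes "\<epsilon> > 0"
  shows "((\<lambda>\<theta>. sqrt ((sph_inner c1 c2 c3 \<phi> \<theta>)\<^sup>2 + \<epsilon>)) has_real_derivative
      sph_inner c1 c2 c3 \<phi> \<theta> * (c1 * cos \<theta> * cos \<phi> + c2 * cos \<theta> * sin \<phi> - c3 * sin \<theta>)
        / sqrt ((sph_inner c1 c2 c3 \<phi> \<theta>)\<^sup>2 + \<epsilon>)) (at \<theta>)"
  by (intro has_real_derivative_sqrt_sq_add assms) (auto intro!: derivative_eq_intros simp: sph_inner_def)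

lemma has_real_derivative_smoothed_sph_inner_\<phi>:
  assumes "\<epsilon> > 0"
  shows "((\<lambda>\<phi>. sqrt ((sph_inner c1 c2 c3 \<phi> \<theta>)\<^sup>2 + \<epsilon>)) has_real_derivative
      sph_inner c1 c2 c3 \<phi> \<theta> * sph_inner c2 (- c1) 0 \<phi> \<theta> / sqrt ((sph_inner c1 c2 c3 \<phi> \<theta>)\<^sup>2 + \<epsilon>)) (at \<phi>)"
  by (intro has_real_derivative_sqrt_sq_add assms) (auto intro!: derivative_eq_intros simp: sph_inner_def)

text \<open>The derivative of the smoothed integrand along a rotation about the y-axis integrates to
  zero because it equals \<open>\<partial>\<^sub>\<theta>(cos \<phi> sin \<theta> H) - \<partial>\<^sub>\<phi>(cos \<theta> sin \<phi> H)\<close> with \<open>H = sqrt (D\<^sup>2 + \<epsilon>)\<close>.\<close>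

lemma integral_rotation_xz_derivative_eq_0:
  assumes "\<epsilon> > 0"
  shows "integral angle_box (\<lambda>t. sph_inner c1 c2 c3 (fst t) (snd t) * sph_inner (- c3) 0 c1 (fst t) (snd t)
           / sqrt ((sph_inner c1 c2 c3 (fst t) (snd t))\<^sup>2 + \<epsilon>) * sin (snd t)) = 0"
proof -
  define D where "D \<phi> \<theta> = sph_inner c1 c2 c3 \<phi> \<theta>" for \<phi> \<theta>
  define H where "H \<phi> \<theta> = sqrt ((D \<phi> \<theta>)\<^sup>2 + \<epsilon>)" for \<phi> \<theta>
  define D\<theta> where "D\<theta> \<phi> \<theta> = c1 * cos \<theta> * cos \<phi> + c2 * cos \<theta> * sin \<phi> - c3 * sin \<theta>" for \<phi> \<theta>
  define P where "P \<phi> \<theta> = cos \<phi> * cos \<theta> * H \<phi> \<theta> + cos \<phi> * sin \<theta> * (D \<phi> \<theta> * D\<theta> \<phi> \<theta> / H \<phi> \<theta>)"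
    for \<phi> \<theta>
  define Q where "Q \<phi> \<theta> = cos \<theta> * cos \<phi> * H \<phi> \<theta>
      + cos \<theta> * sin \<phi> * (D \<phi> \<theta> * sph_inner c2 (- c1) 0 \<phi> \<theta> / H \<phi> \<theta>)" for \<phi> \<theta>
  have H_pos: "H \<phi> \<theta> > 0" for \<phi> \<theta>
    unfolding H_def using assms by (rule sqrt_sq_add_pos)
  have H_\<theta>: "((\<lambda>\<theta>. H \<phi> \<theta>) has_real_derivative D \<phi> \<theta> * D\<theta> \<phi> \<theta> / H \<phi> \<theta>) (at \<theta>)" for \<phi> \<theta>
    unfolding H_def D_def D\<theta>_def by (rule has_real_derivative_smoothed_sph_inner_\<theta>[OF assms])
  have H_\<phi>: "((\<lambda>\<phi>. H \<phi> \<theta>) has_real_derivative D \<phi> \<theta> * sph_inner c2 (- c1) 0 \<phi> \<theta> / H \<phi> \<theta>) (at \<phi>)"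
    for \<phi> \<theta>
    unfolding H_def D_def by (rule has_real_derivative_smoothed_sph_inner_\<phi>[OF assms])
  have integrand: "sph_inner c1 c2 c3 \<phi> \<theta> * sph_inner (- c3) 0 c1 \<phi> \<theta>
      / sqrt ((sph_inner c1 c2 c3 \<phi> \<theta>)\<^sup>2 + \<epsilon>) * sin \<theta> = P \<phi> \<theta> - Q \<phi> \<theta>" for \<phi> \<theta>
    using H_pos[of \<phi> \<theta>]
    unfolding P_def Q_def H_def[symmetric] D_def[symmetric] D\<theta>_def
    by (simp add: field_simps D_def sph_inner_def power2_eq_square)
      (use sin_cos_squared_add[of \<phi>] in algebra)
  show ?thesis unfolding integrand
  proof (rule integral_angle_box_total_derivative_eq_0
      [where F = "\<lambda>\<phi> \<theta>. cos \<phi> * sin \<theta> * H \<phi> \<theta>" and G = "\<lambda>\<phi> \<theta>. cos \<theta> * sin \<phi> * H \<phi> \<theta>"])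
    show "((\<lambda>\<theta>. cos \<phi> * sin \<theta> * H \<phi> \<theta>) has_real_derivative P \<phi> \<theta>) (at \<theta>)" for \<phi> \<theta>
      by (auto intro!: derivative_eq_intros H_\<theta> simp: P_def)
    show "((\<lambda>\<phi>. cos \<theta> * sin \<phi> * H \<phi> \<theta>) has_real_derivative Q \<phi> \<theta>) (at \<phi>)" for \<phi> \<theta>
      by (auto intro!: derivative_eq_intros H_\<phi> simp: Q_def)
    show "continuous_on angle_box (\<lambda>t. P (fst t) (snd t))" "continuous_on angle_box (\<lambda>t. Q (fst t) (snd t))"
      using H_pos unfolding P_def Q_def H_def D_def D\<theta>_def
      by (intro continuous_intros; auto simp: less_le)+
  qed simp_all
qed

text \<open>Similarly for a rotation about the z-axis, with derivative \<open>-\<partial>\<^sub>\<phi>(sin \<theta> H)\<close>.\<close>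

lemma integral_rotation_xy_derivative_eq_0:
  assumes "\<epsilon> > 0"
  shows "integral angle_box (\<lambda>t. sph_inner c1 c2 c3 (fst t) (snd t) * sph_inner (- c2) c1 0 (fst t) (snd t)
           / sqrt ((sph_inner c1 c2 c3 (fst t) (snd t))\<^sup>2 + \<epsilon>) * sin (snd t)) = 0"
proof -
  define H where "H \<phi> \<theta> = sqrt ((sph_inner c1 c2 c3 \<phi> \<theta>)\<^sup>2 + \<epsilon>)" for \<phi> \<theta>
  define Q where "Q \<phi> \<theta> = sin \<theta> * (sph_inner c1 c2 c3 \<phi> \<theta> * sph_inner c2 (- c1) 0 \<phi> \<theta> / H \<phi> \<theta>)"
    for \<phi> \<theta>
  have H_\<phi>: "((\<lambda>\<phi>. H \<phi> \<theta>) has_real_derivative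
      sph_inner c1 c2 c3 \<phi> \<theta> * sph_inner c2 (- c1) 0 \<phi> \<theta> / H \<phi> \<theta>) (at \<phi>)" for \<phi> \<theta>
    unfolding H_def by (rule has_real_derivative_smoothed_sph_inner_\<phi>[OF assms])
  have integrand: "sph_inner c1 c2 c3 \<phi> \<theta> * sph_inner (- c2) c1 0 \<phi> \<theta>
      / sqrt ((sph_inner c1 c2 c3 \<phi> \<theta>)\<^sup>2 + \<epsilon>) * sin \<theta> = 0 - Q \<phi> \<theta>" for \<phi> \<theta>
    by (simp add: Q_def H_def sph_inner_def minus_divide_left algebra_simps)
  show ?thesis unfolding integrand
  proof (rule integral_angle_box_total_derivative_eq_0
      [where F = "\<lambda>_ _. 0" and F' = "\<lambda>_ _. 0" and G = "\<lambda>\<phi> \<theta>. sin \<theta> * H \<phi> \<theta>"])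
    show "((\<lambda>\<phi>. sin \<theta> * H \<phi> \<theta>) has_real_derivative Q \<phi> \<theta>) (at \<phi>)" for \<phi> \<theta>
      by (auto intro!: derivative_eq_intros H_\<phi> simp: Q_def)
    show "continuous_on angle_box (\<lambda>t. Q (fst t) (snd t))"
      using sqrt_sq_add_pos[OF assms] unfolding Q_def H_def
      by (intro continuous_intros) (auto simp: less_le)
  qed (simp_all add: H_def sph_inner_def)
qed

definition smoothed_sphere_integral :: "real \<Rightarrow> real \<Rightarrow> real \<Rightarrow> real \<Rightarrow> real" where
  "smoothed_sphere_integral \<epsilon> c1 c2 c3 =
     integral angle_box (\<lambda>t. sqrt ((sph_inner c1 c2 c3 (fst t) (snd t))\<^sup>2 + \<epsilon>) * sin (snd t))"

lemma smoothed_sphere_integral_rotate_xz: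
  assumes "\<epsilon> > 0"
  shows "smoothed_sphere_integral \<epsilon> (c1 * cos \<alpha> - c3 * sin \<alpha>) c2 (c1 * sin \<alpha> + c3 * cos \<alpha>)
       = smoothed_sphere_integral \<epsilon> c1 c2 c3"
proof -
  define R where "R \<alpha> t = sph_inner (c1 * cos \<alpha> - c3 * sin \<alpha>) c2 (c1 * sin \<alpha> + c3 * cos \<alpha>) (fst t) (snd t)"
    for \<alpha> and t :: "real \<times> real"
  define R' where "R' \<alpha> t = sph_inner (- (c1 * sin \<alpha> + c3 * cos \<alpha>)) 0 (c1 * cos \<alpha> - c3 * sin \<alpha>) (fst t) (snd t)"
    for \<alpha> and t :: "real \<times> real"
  have "integral angle_box (\<lambda>t. sqrt ((R \<alpha> t)\<^sup>2 + \<epsilon>) * sin (snd t))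
      = integral angle_box (\<lambda>t. sqrt ((R 0 t)\<^sup>2 + \<epsilon>) * sin (snd t))"
  proof (rule integral_parametric_constant
      [where fx = "\<lambda>\<alpha> t. R \<alpha> t * R' \<alpha> t / sqrt ((R \<alpha> t)\<^sup>2 + \<epsilon>) * sin (snd t)"])
    show "((\<lambda>\<alpha>. sqrt ((R \<alpha> t)\<^sup>2 + \<epsilon>) * sin (snd t)) has_real_derivative
        R \<alpha> t * R' \<alpha> t / sqrt ((R \<alpha> t)\<^sup>2 + \<epsilon>) * sin (snd t)) (at \<alpha>)" for \<alpha> t
      by (intro DERIV_cmult_right has_real_derivative_sqrt_sq_add assms)
        (auto intro!: derivative_eq_intros simp: R_def R'_def sph_inner_def algebra_simps)
    show "continuous_on (UNIV \<times> angle_box)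
        (\<lambda>(\<alpha>, t). R \<alpha> t * R' \<alpha> t / sqrt ((R \<alpha> t)\<^sup>2 + \<epsilon>) * sin (snd t))"
      using sqrt_sq_add_pos[OF assms] unfolding R_def R'_def case_prod_beta'
      by (intro continuous_intros) (auto simp: less_le)
    show "integral angle_box (\<lambda>t. R \<alpha> t * R' \<alpha> t / sqrt ((R \<alpha> t)\<^sup>2 + \<epsilon>) * sin (snd t)) = 0" for \<alpha>
      unfolding R_def R'_def by (rule integral_rotation_xz_derivative_eq_0[OF assms])
  qed (unfold R_def, intro continuous_intros)
  then show ?thesis unfolding smoothed_sphere_integral_def R_def by simp
qed

lemma smoothed_sphere_integral_rotate_xy:
  assumes "\<epsilon> > 0"
  shows "smoothed_sphere_integral \<epsilon> (c1 * cos \<alpha> - c2 * sin \<alpha>) (c1 * sin \<alpha> + c2 * cos \<alpha>) c3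
       = smoothed_sphere_integral \<epsilon> c1 c2 c3"
proof -
  define R where "R \<alpha> t = sph_inner (c1 * cos \<alpha> - c2 * sin \<alpha>) (c1 * sin \<alpha> + c2 * cos \<alpha>) c3 (fst t) (snd t)"
    for \<alpha> and t :: "real \<times> real"
  define R' where "R' \<alpha> t = sph_inner (- (c1 * sin \<alpha> + c2 * cos \<alpha>)) (c1 * cos \<alpha> - c2 * sin \<alpha>) 0 (fst t) (snd t)"
    for \<alpha> and t :: "real \<times> real"
  have "integral angle_box (\<lambda>t. sqrt ((R \<alpha> t)\<^sup>2 + \<epsilon>) * sin (snd t))
      = integral angle_box (\<lambda>t. sqrt ((R 0 t)\<^sup>2 + \<epsilon>) * sin (snd t))"
  proof (rule integral_parametric_constant
      [where fx = "\<lambda>\<alpha> t. R \<alpha> t * R' \<alpha> t / sqrt ((R \<alpha> t)\<^sup>2 + \<epsilon>) * sin (snd t)"])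
    show "((\<lambda>\<alpha>. sqrt ((R \<alpha> t)\<^sup>2 + \<epsilon>) * sin (snd t)) has_real_derivative
        R \<alpha> t * R' \<alpha> t / sqrt ((R \<alpha> t)\<^sup>2 + \<epsilon>) * sin (snd t)) (at \<alpha>)" for \<alpha> t
      by (intro DERIV_cmult_right has_real_derivative_sqrt_sq_add assms)
        (auto intro!: derivative_eq_intros simp: R_def R'_def sph_inner_def algebra_simps)
    show "continuous_on (UNIV \<times> angle_box)
        (\<lambda>(\<alpha>, t). R \<alpha> t * R' \<alpha> t / sqrt ((R \<alpha> t)\<^sup>2 + \<epsilon>) * sin (snd t))"
      using sqrt_sq_add_pos[OF assms] unfolding R_def R'_def case_prod_beta'
      by (intro continuous_intros) (auto simp: less_le)
    show "integral angle_box (\<lambda>t. R \<alpha> t * R' \<alpha> t / sqrt ((R \<alpha> t)\<^sup>2 + \<epsilon>) * sin (snd t)) = 0" for \<alpha>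
      unfolding R_def R'_def by (rule integral_rotation_xy_derivative_eq_0[OF assms])
  qed (unfold R_def, intro continuous_intros)
  then show ?thesis unfolding smoothed_sphere_integral_def R_def by simp
qed

lemma polar_coordinates:
  fixes x y :: real
  obtains t where "x = sqrt (x\<^sup>2 + y\<^sup>2) * cos t" "y = sqrt (x\<^sup>2 + y\<^sup>2) * sin t"
proof
  define z where "z = Complex x y"
  have "rcis (cmod z) (Arg z) = z" by (rule rcis_cmod_Arg)
  then have "Re z = cmod z * cos (Arg z)" "Im z = cmod z * sin (Arg z)"
    by (metis Re_rcis, metis Im_rcis)
  then show "x = sqrt (x\<^sup>2 + y\<^sup>2) * cos (Arg z)" "y = sqrt (x\<^sup>2 + y\<^sup>2) * sin (Arg z)"
    by (simp_all add: z_def cmod_def)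
qed

lemma smoothed_sphere_integral_eq_axis:
  assumes "\<epsilon> > 0"
  shows "smoothed_sphere_integral \<epsilon> b1 b2 b3 = smoothed_sphere_integral \<epsilon> 0 0 (sqrt (b1\<^sup>2 + b2\<^sup>2 + b3\<^sup>2))"
proof -
  define r where "r = sqrt (b1\<^sup>2 + b2\<^sup>2)"
  define N where "N = sqrt (b1\<^sup>2 + b2\<^sup>2 + b3\<^sup>2)"
  obtain t1 where t1: "b1 = r * cos t1" "b2 = r * sin t1"
    unfolding r_def by (rule polar_coordinates)
  obtain t2 where t2: "b3 = N * cos t2" "r = N * sin t2"
    using polar_coordinates[of b3 r] unfolding r_def N_def by (auto simp: add_ac)
  have "smoothed_sphere_integral \<epsilon> b1 b2 b3
      = smoothed_sphere_integral \<epsilon> (b1 * cos (- t1) - b2 * sin (- t1)) (b1 * sin (- t1) + b2 * cos (- t1)) b3"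
    by (rule smoothed_sphere_integral_rotate_xy[OF assms, symmetric])
  also have "\<dots> = smoothed_sphere_integral \<epsilon> r 0 b3"
    unfolding t1 by (simp add: algebra_simps flip: distrib_left power2_eq_square)
  also have "\<dots> = smoothed_sphere_integral \<epsilon> (r * cos t2 - b3 * sin t2) 0 (r * sin t2 + b3 * cos t2)"
    by (rule smoothed_sphere_integral_rotate_xz[OF assms, symmetric])
  also have "\<dots> = smoothed_sphere_integral \<epsilon> 0 0 N"
    unfolding t2 by (simp add: algebra_simps flip: distrib_left power2_eq_square)
  finally show ?thesis unfolding N_def .
qed

lemma integral_abs_cos_sin: "integral {0..pi} (\<lambda>\<theta>. \<bar>cos \<theta>\<bar> * sin \<theta>) = 1"
proof -
  have "integral {0..pi/2} (\<lambda>\<theta>. \<bar>cos \<theta>\<bar> * sin \<theta>) = integral {0..pi/2} (\<lambda>\<theta>. cos \<theta> * sin \<theta>)"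
    by (intro integral_cong) (simp add: cos_ge_zero)
  also have "\<dots> = (sin (pi/2))\<^sup>2 / 2 - (sin 0)\<^sup>2 / 2"
    by (rule integral_eq_antiderivative_diff) (auto intro!: derivative_eq_intros)
  finally have left: "integral {0..pi/2} (\<lambda>\<theta>. \<bar>cos \<theta>\<bar> * sin \<theta>) = 1/2" by simp
  have "integral {pi/2..pi} (\<lambda>\<theta>. \<bar>cos \<theta>\<bar> * sin \<theta>) = integral {pi/2..pi} (\<lambda>\<theta>. - cos \<theta> * sin \<theta>)"
  proof (intro integral_cong)
    fix \<theta> assume "\<theta> \<in> {pi/2..pi}"
    then have "cos (pi - \<theta>) \<ge> 0" by (intro cos_ge_zero) auto
    then show "\<bar>cos \<theta>\<bar> * sin \<theta> = - cos \<theta> * sin \<theta>" by simp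
  qed
  also have "\<dots> = - (sin pi)\<^sup>2 / 2 - (- (sin (pi/2))\<^sup>2 / 2)"
    by (rule integral_eq_antiderivative_diff) (auto intro!: derivative_eq_intros)
  finally have right: "integral {pi/2..pi} (\<lambda>\<theta>. \<bar>cos \<theta>\<bar> * sin \<theta>) = 1/2" by simp
  have "(\<lambda>\<theta>. \<bar>cos \<theta>\<bar> * sin \<theta>) integrable_on {0..pi}"
    by (intro integrable_continuous_interval continuous_intros)
  then show ?thesis
    using Henstock_Kurzweil_Integration.integral_combine[of 0 "pi/2" pi] left right by fastforce
qed

lemma smoothed_sphere_integral_axis_le:
  assumes "\<epsilon> > 0" and "N \<ge> 0"
  shows "smoothed_sphere_integral \<epsilon> 0 0 N \<le> 2 * pi * N + 4 * pi * sqrt \<epsilon>"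
proof -
  have "smoothed_sphere_integral \<epsilon> 0 0 N
      \<le> integral angle_box (\<lambda>t. (N * \<bar>cos (snd t)\<bar> + sqrt \<epsilon>) * sin (snd t))"
    unfolding smoothed_sphere_integral_def
  proof (rule integral_le)
    fix t :: "real \<times> real" assume t: "t \<in> angle_box"
    have "(sph_inner 0 0 N (fst t) (snd t))\<^sup>2 + \<epsilon> \<le> (N * \<bar>cos (snd t)\<bar> + sqrt \<epsilon>)\<^sup>2"
      using assms by (simp add: sph_inner_def power2_sum power_mult_distrib)
    then have "sqrt ((sph_inner 0 0 N (fst t) (snd t))\<^sup>2 + \<epsilon>) \<le> N * \<bar>cos (snd t)\<bar> + sqrt \<epsilon>"
      using assms by (intro real_le_lsqrt) auto
    then show "sqrt ((sph_inner 0 0 N (fst t) (snd t))\<^sup>2 + \<epsilon>) * sin (snd t)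
        \<le> (N * \<bar>cos (snd t)\<bar> + sqrt \<epsilon>) * sin (snd t)"
      using sin_snd_nonneg_angle_box[OF t] by (rule mult_right_mono)
  qed (intro integrable_continuous continuous_intros)+
  also have "\<dots> = integral {0..2 * pi} (\<lambda>\<phi>. integral {0..pi} (\<lambda>\<theta>. N * (\<bar>cos \<theta>\<bar> * sin \<theta>) + sqrt \<epsilon> * sin \<theta>))"
    by (subst integral_prod_continuous) (auto intro!: continuous_intros simp: algebra_simps)
  also have "\<dots> = 2 * pi * (N + 2 * sqrt \<epsilon>)"
    by (subst integral_add) (auto intro!: integrable_continuous_interval continuous_intros
        simp: integral_abs_cos_sin)
  finally show ?thesis by (simp add: algebra_simps)
qed

lemma sphere_integral_abs_sph_inner_le:
  "integral angle_box (\<lambda>t. \<bar>sph_inner b1 b2 b3 (fst t) (snd t)\<bar> * sin (snd t))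
     \<le> 2 * pi * sqrt (b1\<^sup>2 + b2\<^sup>2 + b3\<^sup>2)"
proof (rule field_le_epsilon)
  fix e :: real assume "e > 0"
  define \<epsilon> where "\<epsilon> = (e / (4 * pi))\<^sup>2"
  have \<epsilon>: "\<epsilon> > 0" "4 * pi * sqrt \<epsilon> = e"
    using \<open>e > 0\<close> by (simp_all add: \<epsilon>_def)
  have "integral angle_box (\<lambda>t. \<bar>sph_inner b1 b2 b3 (fst t) (snd t)\<bar> * sin (snd t))
      \<le> smoothed_sphere_integral \<epsilon> b1 b2 b3"
    unfolding smoothed_sphere_integral_def
  proof (rule integral_le)
    fix t :: "real \<times> real" assume t: "t \<in> angle_box"
    have "\<bar>sph_inner b1 b2 b3 (fst t) (snd t)\<bar> \<le> sqrt ((sph_inner b1 b2 b3 (fst t) (snd t))\<^sup>2 + \<epsilon>)"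
      using \<epsilon> by (intro real_le_rsqrt) simp
    then show "\<bar>sph_inner b1 b2 b3 (fst t) (snd t)\<bar> * sin (snd t)
        \<le> sqrt ((sph_inner b1 b2 b3 (fst t) (snd t))\<^sup>2 + \<epsilon>) * sin (snd t)"
      using sin_snd_nonneg_angle_box[OF t] by (rule mult_right_mono)
  qed (intro integrable_continuous continuous_intros)+
  also have "\<dots> = smoothed_sphere_integral \<epsilon> 0 0 (sqrt (b1\<^sup>2 + b2\<^sup>2 + b3\<^sup>2))"
    by (rule smoothed_sphere_integral_eq_axis[OF \<epsilon>(1)])
  also have "\<dots> \<le> 2 * pi * sqrt (b1\<^sup>2 + b2\<^sup>2 + b3\<^sup>2) + e"
    using smoothed_sphere_integral_axis_le[OF \<epsilon>(1)] \<epsilon>(2) by simp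
  finally show "integral angle_box (\<lambda>t. \<bar>sph_inner b1 b2 b3 (fst t) (snd t)\<bar> * sin (snd t))
      \<le> 2 * pi * sqrt (b1\<^sup>2 + b2\<^sup>2 + b3\<^sup>2) + e" .
qed

lemma sph_inner_sq_le: "(sph_inner a1 a2 a3 \<phi> \<theta>)\<^sup>2 \<le> a1\<^sup>2 + a2\<^sup>2 + a3\<^sup>2"
proof -
  have "(sin \<theta> * cos \<phi>)\<^sup>2 + (sin \<theta> * sin \<phi>)\<^sup>2 + (cos \<theta>)\<^sup>2 = 1"
    by (simp add: power_mult_distrib flip: distrib_left)
  then show ?thesis
    using cauchy_schwarz3[of a1 "sin \<theta> * cos \<phi>" a2 "sin \<theta> * sin \<phi>" a3 "cos \<theta>"]
    by (simp add: sph_inner_def algebra_simps)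
qed

lemma integrable_pair_abs_sph_inner:
  fixes \<mu> :: "'l measure" and a1 a2 a3 :: "'l \<Rightarrow> real"
  assumes \<mu>: "prob_space \<mu>"
    and [measurable]: "a1 \<in> borel_measurable \<mu>" "a2 \<in> borel_measurable \<mu>" "a3 \<in> borel_measurable \<mu>"
    and a_le_1: "\<And>l. l \<in> space \<mu> \<Longrightarrow> (a1 l)\<^sup>2 + (a2 l)\<^sup>2 + (a3 l)\<^sup>2 \<le> 1"
  shows "integrable (\<mu> \<Otimes>\<^sub>M lborel) (\<lambda>(l, t).
      indicator angle_box t * (\<bar>sph_inner (a1 l) (a2 l) (a3 l) (fst t) (snd t)\<bar> * sin (snd t)))"
    (is "integrable _ (\<lambda>(l, t). ?f l t)")
proof (rule Bochner_Integration.integrable_bound)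
  interpret prob_space \<mu> by (rule \<mu>)
  interpret pair_sigma_finite \<mu> "lborel :: (real \<times> real) measure" by unfold_locales
  have "emeasure (\<mu> \<Otimes>\<^sub>M lborel) (space \<mu> \<times> angle_box) = emeasure \<mu> (space \<mu>) * emeasure lborel angle_box"
    by (rule lborel.emeasure_pair_measure_Times) auto
  also have "\<dots> < \<infinity>"
    by (simp add: emeasure_lborel_cbox_eq ennreal_mult_less_top emeasure_space_1)
  finally show "integrable (\<mu> \<Otimes>\<^sub>M lborel) (indicator (space \<mu> \<times> angle_box) :: _ \<Rightarrow> real)"
    by (subst integrable_indicator_iff) (auto simp: space_pair_measure Times_Int_Times)
  have "\<bar>sph_inner (a1 l) (a2 l) (a3 l) \<phi> \<theta>\<bar> * \<bar>sin \<theta>\<bar> \<le> 1" if "l \<in> space \<mu>" for l \<phi> \<theta>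
  proof -
    have "(sph_inner (a1 l) (a2 l) (a3 l) \<phi> \<theta>)\<^sup>2 \<le> 1"
      using sph_inner_sq_le a_le_1[OF that] by (rule order_trans)
    then show ?thesis
      by (intro mult_le_one) (auto simp: abs_square_le_1)
  qed
  then show "AE x in \<mu> \<Otimes>\<^sub>M lborel. norm (case x of (l, t) \<Rightarrow> ?f l t)
      \<le> norm (indicator (space \<mu> \<times> angle_box) x :: real)"
    by (intro AE_I2) (auto simp: space_pair_measure indicator_def abs_mult)
  have snd_measurable: "(\<lambda>x. g (snd x)) \<in> borel_measurable (\<mu> \<Otimes>\<^sub>M lborel)"
    if "continuous_on UNIV g" for g :: "real \<times> real \<Rightarrow> real"
    using that by (intro measurable_compose[OF measurable_snd])
      (simp add: borel_measurable_continuous_onI measurable_lborel1)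
  define z1 z2 z3 z4 where "z1 t = sin (snd t) * cos (fst t)" and "z2 t = sin (snd t) * sin (fst t)"
    and "z3 t = cos (snd t)" and "z4 t = sin (snd t)" for t :: "real \<times> real"
  have [measurable]: "(\<lambda>x. z1 (snd x)) \<in> borel_measurable (\<mu> \<Otimes>\<^sub>M lborel)"
    "(\<lambda>x. z2 (snd x)) \<in> borel_measurable (\<mu> \<Otimes>\<^sub>M lborel)"
    "(\<lambda>x. z3 (snd x)) \<in> borel_measurable (\<mu> \<Otimes>\<^sub>M lborel)"
    "(\<lambda>x. z4 (snd x)) \<in> borel_measurable (\<mu> \<Otimes>\<^sub>M lborel)"
    unfolding z1_def z2_def z3_def z4_def by (intro snd_measurable continuous_intros)+
  have [measurable]: "(\<lambda>x. indicator angle_box (snd x) :: real) \<in> borel_measurable (\<mu> \<Otimes>\<^sub>M lborel)"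
    by (rule measurable_compose[OF measurable_snd]) (simp add: measurable_lborel1 borel_closed)
  have "(\<lambda>(l, t). ?f l t) = (\<lambda>x. indicator angle_box (snd x)
      * (\<bar>a1 (fst x) * z1 (snd x) + a2 (fst x) * z2 (snd x) + a3 (fst x) * z3 (snd x)\<bar> * z4 (snd x)))"
    by (simp add: sph_inner_def z1_def z2_def z3_def z4_def case_prod_beta' algebra_simps)
  also have "\<dots> \<in> borel_measurable (\<mu> \<Otimes>\<^sub>M lborel)"
    by measurable
  finally show "(\<lambda>(l, t). ?f l t) \<in> borel_measurable (\<mu> \<Otimes>\<^sub>M lborel)" .
qed

lemma
  fixes \<mu> :: "'l measure" and a1 a2 a3 :: "'l \<Rightarrow> real"
  assumes \<mu>: "prob_space \<mu>"
    and a_measurable: "a1 \<in> borel_measurable \<mu>" "a2 \<in> borel_measurable \<mu>" "a3 \<in> borel_measurable \<mu>"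
    and a_le_1: "\<And>l. l \<in> space \<mu> \<Longrightarrow> (a1 l)\<^sup>2 + (a2 l)\<^sup>2 + (a3 l)\<^sup>2 \<le> 1"
  shows sphere_expectation_abs_sph_inner_integrable:
      "(\<lambda>t. \<integral>l. \<bar>sph_inner (a1 l) (a2 l) (a3 l) (fst t) (snd t)\<bar> * sin (snd t) \<partial>\<mu>) integrable_on angle_box"
    and sphere_integral_expectation_abs_sph_inner_le:
      "integral angle_box (\<lambda>t. \<integral>l. \<bar>sph_inner (a1 l) (a2 l) (a3 l) (fst t) (snd t)\<bar> * sin (snd t) \<partial>\<mu>)
         \<le> 2 * pi"
proof -
  interpret prob_space \<mu> by (rule \<mu>)
  interpret pair_sigma_finite \<mu> "lborel :: (real \<times> real) measure" by unfold_locales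
  define k where "k l t = \<bar>sph_inner (a1 l) (a2 l) (a3 l) (fst t) (snd t)\<bar> * sin (snd t)"
    for l and t :: "real \<times> real"
  define f where "f l t = indicator angle_box t * k l t" for l t
  have f_integrable: "integrable (\<mu> \<Otimes>\<^sub>M lborel) (\<lambda>(l, t). f l t)"
    unfolding f_def k_def using \<mu> a_measurable a_le_1 by (rule integrable_pair_abs_sph_inner)
  have set_integrable: "set_integrable lborel angle_box (\<lambda>t. \<integral>l. k l t \<partial>\<mu>)"
    using integrable_snd[OF f_integrable] unfolding set_integrable_def f_def by simp
  then show "(\<lambda>t. \<integral>l. \<bar>sph_inner (a1 l) (a2 l) (a3 l) (fst t) (snd t)\<bar> * sin (snd t) \<partial>\<mu>) integrable_on angle_box"
    unfolding k_def by (rule set_borel_integral_eq_integral(1))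
  have "integral angle_box (\<lambda>t. \<integral>l. k l t \<partial>\<mu>) = (\<integral>t. (\<integral>l. f l t \<partial>\<mu>) \<partial>lborel)"
    using set_borel_integral_eq_integral(2)[OF set_integrable] by (simp add: set_lebesgue_integral_def f_def)
  also have "\<dots> = (\<integral>l. (\<integral>t. f l t \<partial>lborel) \<partial>\<mu>)"
    by (rule Fubini_integral[OF f_integrable])
  also have "\<dots> \<le> (\<integral>l. 2 * pi \<partial>\<mu>)"
  proof (rule integral_mono[OF integrable_fst[OF f_integrable]])
    fix l assume l: "l \<in> space \<mu>"
    have "set_integrable lborel angle_box (k l)"
      unfolding set_integrable_def k_def by (intro borel_integrable_compact continuous_intros) auto
    then have "(\<integral>t. f l t \<partial>lborel) = integral angle_box (k l)"
      by (subst set_borel_integral_eq_integral(2)[symmetric]) (simp_all add: set_lebesgue_integral_def f_def[abs_def])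
    also have "\<dots> \<le> 2 * pi * sqrt ((a1 l)\<^sup>2 + (a2 l)\<^sup>2 + (a3 l)\<^sup>2)"
      unfolding k_def by (rule sphere_integral_abs_sph_inner_le)
    also have "\<dots> \<le> 2 * pi"
      using a_le_1[OF l] by simp
    finally show "(\<integral>t. f l t \<partial>lborel) \<le> 2 * pi" .
  qed simp
  finally show "integral angle_box (\<lambda>t. \<integral>l. \<bar>sph_inner (a1 l) (a2 l) (a3 l) (fst t) (snd t)\<bar> * sin (snd t) \<partial>\<mu>)
      \<le> 2 * pi"
    by (simp add: k_def prob_space)
qed

lemma R_G_le_half_if_dominated:
  fixes \<mu> :: "'l measure" and a1 a2 a3 :: "'l \<Rightarrow> real"
  assumes \<mu>: "prob_space \<mu>"
    and a_measurable: "a1 \<in> borel_measurable \<mu>" "a2 \<in> borel_measurable \<mu>" "a3 \<in> borel_measurable \<mu>"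
    and a_le_1: "\<And>l. l \<in> space \<mu> \<Longrightarrow> (a1 l)\<^sup>2 + (a2 l)\<^sup>2 + (a3 l)\<^sup>2 \<le> 1"
    and dominated: "\<And>\<phi> \<theta>. sqrt (a * (sin \<theta>)\<^sup>2 * (cos \<phi>)\<^sup>2 + b * (sin \<theta>)\<^sup>2 * (sin \<phi>)\<^sup>2 + c * (cos \<theta>)\<^sup>2)
        \<le> (\<integral>l. \<bar>sph_inner (a1 l) (a2 l) (a3 l) \<phi> \<theta>\<bar> \<partial>\<mu>)"
  shows "R_G a b c \<le> 1 / 2"
proof -
  let ?E = "\<lambda>t. \<integral>l. \<bar>sph_inner (a1 l) (a2 l) (a3 l) (fst t) (snd t)\<bar> * sin (snd t) \<partial>\<mu>"
  have "integral angle_box (\<lambda>(\<phi>, \<theta>). sqrt (a * (sin \<theta>)\<^sup>2 * (cos \<phi>)\<^sup>2 + b * (sin \<theta>)\<^sup>2 * (sin \<phi>)\<^sup>2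
      + c * (cos \<theta>)\<^sup>2) * sin \<theta>) \<le> integral angle_box ?E"
  proof (rule integral_le)
    show "(\<lambda>(\<phi>, \<theta>). sqrt (a * (sin \<theta>)\<^sup>2 * (cos \<phi>)\<^sup>2 + b * (sin \<theta>)\<^sup>2 * (sin \<phi>)\<^sup>2
      + c * (cos \<theta>)\<^sup>2) * sin \<theta>) integrable_on angle_box"
      unfolding case_prod_beta' by (intro integrable_continuous continuous_intros)
    show "?E integrable_on angle_box"
      by (rule sphere_expectation_abs_sph_inner_integrable[OF \<mu> a_measurable a_le_1])
  next
    fix t :: "real \<times> real" assume t: "t \<in> angle_box"
    obtain \<phi> \<theta> where t_eq: "t = (\<phi>, \<theta>)" by (cases t)
    have "sqrt (a * (sin \<theta>)\<^sup>2 * (cos \<phi>)\<^sup>2 + b * (sin \<theta>)\<^sup>2 * (sin \<phi>)\<^sup>2 + c * (cos \<theta>)\<^sup>2) * sin \<theta>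
        \<le> (\<integral>l. \<bar>sph_inner (a1 l) (a2 l) (a3 l) \<phi> \<theta>\<bar> \<partial>\<mu>) * sin \<theta>"
      using dominated sin_snd_nonneg_angle_box[OF t] unfolding t_eq by (intro mult_right_mono) auto
    then show "(\<lambda>(\<phi>, \<theta>). sqrt (a * (sin \<theta>)\<^sup>2 * (cos \<phi>)\<^sup>2 + b * (sin \<theta>)\<^sup>2 * (sin \<phi>)\<^sup>2
      + c * (cos \<theta>)\<^sup>2) * sin \<theta>) t \<le> ?E t"
      unfolding t_eq by simp
  qed
  also have "\<dots> \<le> 2 * pi"
    by (rule sphere_integral_expectation_abs_sph_inner_le[OF \<mu> a_measurable a_le_1])
  finally show ?thesis
    unfolding R_G_def by (simp add: field_simps)
qed

lemma R_G_singular_values_le_half: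
  fixes T :: "real^3^3" and \<mu> :: "'l measure" and s :: "'l \<Rightarrow> real^3"
  assumes T: "singular_values3 T \<tau>1 \<tau>2 \<tau>3"
    and \<mu>: "prob_space \<mu>" and s_measurable: "s \<in> borel_measurable \<mu>"
    and s_le_1: "\<And>l. l \<in> space \<mu> \<Longrightarrow> norm (s l) \<le> 1"
    and T_le: "\<And>w. norm (T *v w) \<le> (\<integral>l. \<bar>s l \<bullet> w\<bar> \<partial>\<mu>)"
  shows "R_G (\<tau>3\<^sup>2) (\<tau>2\<^sup>2) (\<tau>1\<^sup>2) \<le> 1 / 2"
proof -
  obtain u1 u2 u3 :: "real^3"
    where frame: "u1 \<bullet> u1 = 1" "u2 \<bullet> u2 = 1" "u3 \<bullet> u3 = 1" "u1 \<bullet> u2 = 0" "u1 \<bullet> u3 = 0" "u2 \<bullet> u3 = 0"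
    and T_frame: "\<And>z1 z2 z3. norm (T *v (z1 *\<^sub>R u1 + z2 *\<^sub>R u2 + z3 *\<^sub>R u3))
      = sqrt (\<tau>3\<^sup>2 * z1\<^sup>2 + \<tau>2\<^sup>2 * z2\<^sup>2 + \<tau>1\<^sup>2 * z3\<^sup>2)"
    using singular_values3_orthonormal_frame[OF T] by metis
  show ?thesis
  proof (rule R_G_le_half_if_dominated
      [of \<mu> "\<lambda>l. s l \<bullet> u1" "\<lambda>l. s l \<bullet> u2" "\<lambda>l. s l \<bullet> u3", OF \<mu>])
    show "(\<lambda>l. s l \<bullet> u1) \<in> borel_measurable \<mu>" "(\<lambda>l. s l \<bullet> u2) \<in> borel_measurable \<mu>"
      "(\<lambda>l. s l \<bullet> u3) \<in> borel_measurable \<mu>"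
      using s_measurable by (auto intro: borel_measurable_inner)
    show "(s l \<bullet> u1)\<^sup>2 + (s l \<bullet> u2)\<^sup>2 + (s l \<bullet> u3)\<^sup>2 \<le> 1" if "l \<in> space \<mu>" for l
    proof -
      have "(norm (s l))\<^sup>2 \<le> 1"
        using s_le_1[OF that] by (simp add: power_le_one)
      then show ?thesis
        using orthonormal3_sum_sq_inner_le[OF frame, of "s l"] by (simp add: power2_norm_eq_inner)
    qed
    fix \<phi> \<theta> :: real
    define n where "n = (sin \<theta> * cos \<phi>) *\<^sub>R u1 + (sin \<theta> * sin \<phi>) *\<^sub>R u2 + cos \<theta> *\<^sub>R u3"
    have "sqrt (\<tau>3\<^sup>2 * (sin \<theta>)\<^sup>2 * (cos \<phi>)\<^sup>2 + \<tau>2\<^sup>2 * (sin \<theta>)\<^sup>2 * (sin \<phi>)\<^sup>2 + \<tau>1\<^sup>2 * (cos \<theta>)\<^sup>2)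
        = norm (T *v n)"
      unfolding n_def T_frame by (simp add: power_mult_distrib mult.assoc)
    also have "\<dots> \<le> (\<integral>l. \<bar>s l \<bullet> n\<bar> \<partial>\<mu>)"
      by (rule T_le)
    also have "\<dots> = (\<integral>l. \<bar>sph_inner (s l \<bullet> u1) (s l \<bullet> u2) (s l \<bullet> u3) \<phi> \<theta>\<bar> \<partial>\<mu>)"
      unfolding n_def sph_inner_def by (simp add: inner_add_right algebra_simps)
    finally show "sqrt (\<tau>3\<^sup>2 * (sin \<theta>)\<^sup>2 * (cos \<phi>)\<^sup>2 + \<tau>2\<^sup>2 * (sin \<theta>)\<^sup>2 * (sin \<phi>)\<^sup>2
        + \<tau>1\<^sup>2 * (cos \<theta>)\<^sup>2) \<le> (\<integral>l. \<bar>sph_inner (s l \<bullet> u1) (s l \<bullet> u2) (s l \<bullet> u3) \<phi> \<theta>\<bar> \<partial>\<mu>)" .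
  qed
qed

theorem corollary2:
  fixes \<rho> :: cmat4 and \<mu> :: "'l measure" and S :: "'l \<Rightarrow> cmat2"
    and p :: "nat \<Rightarrow> (nat \<Rightarrow> cmat2) \<Rightarrow> nat \<Rightarrow> 'l \<Rightarrow> real"
    and \<tau>1 \<tau>2 \<tau>3 :: real
  assumes "density_matrix \<rho>"
    and "singular_values3 (corr_matrix \<rho>) \<tau>1 \<tau>2 \<tau>3"
    and "lhs_model \<mu> S p \<rho>"
  shows "R_G (\<tau>3\<^sup>2) (\<tau>2\<^sup>2) (\<tau>1\<^sup>2) \<le> 1 / 2"
proof (rule R_G_singular_values_le_half[OF assms(2)])
  show "prob_space \<mu>" and "(\<lambda>l. bloch_vector (S l)) \<in> borel_measurable \<mu>"
    and "\<And>l. l \<in> space \<mu> \<Longrightarrow> norm (bloch_vector (S l)) \<le> 1"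
    using assms(3) norm_bloch_vector_le_1 unfolding lhs_model_def by auto
  show "norm (corr_matrix \<rho> *v w) \<le> (\<integral>l. \<bar>bloch_vector (S l) \<bullet> w\<bar> \<partial>\<mu>)" for w
    by (rule lhs_model_norm_corr_le[OF assms(3)])
qed

end
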